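(* Let $L$ be an oriented, ordered virtual link diagram with affine bilabeling $C$. Let $L_i$ be a component of weight $n$ whose starting point $s$ carries bilabel $(a_1,a_2)$. Let $c$ be the first classical crossing met by $L_i$ after $s$, and suppose $c$ is a self-crossing of $L_i$. Let $\iota\in\{\pm1\}$ be the index change of this passage of $L_i$ through $c$. Let $C'$ be obtained by moving the starting point of $L_i$ forward to a point $s'$ just past this passage through $c$, with the same starting bilabel, and keeping everything else the same. Then: - the weight of $c$ changes by $+n$ if the passage is the overstrand of $c$, and by $-n$ if it is the understrand; and - all other labels of $L_i$ (those not on the segment between $s$ and $s'$) shift by $-\iota$, the opposite of the index change.
   Context: **Diagrams.** A virtual link diagram is an oriented planar diagram of ordered closed curves $L_1,\dots,L_n$ (components) with classical and virtual crossings. **Crossing conventions.** Draw a classical crossing with both strands oriented upward. - The bottom-left-to-top-right strand has index change $-1$; the bottom-right-to-top-left strand has index change $+1$. - The crossing is positive if the overstrand is the bottom-left-to-top-right strand, and negative otherwise. - Self-crossings have both strands on one component; external crossings have strands on different components. - The weight of a component $L_i$ is the sum of the index changes of $L_i$ over its passages through external classical crossings. **Affine bilabeling.** - Each component gets a starting point with bilabel $(a^{(i)}_1,a^{(i)}_2)$ of formal integer variables. - The bilabel is carried along the component in its orientation and is unchanged at virtual crossings. - At a classical crossing with index change $\varepsilon$, the first entry changes by $\varepsilon$ at a self-crossing, and the second entry changes by $\varepsilon$ at an external crossing. - On returning to the starting point, the label is off by the component's weight in the second entry; this discrepancy is placed at the starting point. **Crossing weight.** For $|(x,y)|=x+y$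 and $c$ drawn with both strands upward: - if $c$ is positive, $W(c)=|\text{bottom-left}|-|\text{top-left}|$; - if $c$ is negative, $W(c)=|\text{bottom-right}|-|\text{top-right}|$. *)

theory Defs
  imports Main
begin

text \<open>Components are numbered 0,...,k-1.  Virtual crossings do not affect labels,
  so a component is recorded as the list of its passages through classical
  crossings, in the order met when travelling from its starting point along
  the orientation.  A passage is (c, over, e): the classical crossing c,
  whether this passage is the overstrand of c, and its index change e
  (-1 for the bottom-left-to-top-right strand, +1 for the other one).
  Arc j of component i (0 <= j <= length) is the piece after the j-th passage
  and before the (j+1)-th; arc 0 starts at the starting point and arc
  (length) ends at the starting point.\<close>

type_synonym 'c passage = "'c \<times> bool \<times> int"
type_synonym 'c diagram = "nat \<Rightarrow> 'c passage list"

definition pcross :: "'c passage \<Rightarrow> 'c" where "pcross q = fst q"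
definition pover :: "'c passage \<Rightarrow> bool" where "pover q = fst (snd q)"
definition ichange :: "'c passage \<Rightarrow> int" where "ichange q = snd (snd q)"

definition wf_diagram :: "nat \<Rightarrow> 'c diagram \<Rightarrow> bool" where
  "wf_diagram k P \<longleftrightarrow>
    (\<forall>i<k. \<forall>j<length (P i). case P i ! j of (c, b, e) \<Rightarrow>
       (e = 1 \<or> e = -1) \<and>
       (\<exists>!ij. fst ij < k \<and> snd ij < length (P (fst ij)) \<and>
              pcross (P (fst ij) ! snd ij) = c \<and> pover (P (fst ij) ! snd ij) = b) \<and>
       (\<exists>i'<k. \<exists>j'<length (P i'). P i' ! j' = (c, \<not> b, - e)))"

definition loc :: "nat \<Rightarrow> 'c diagram \<Rightarrow> 'c \<Rightarrow> bool \<Rightarrow> nat \<times> nat" where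
  "loc k P c b = (THE ij. fst ij < k \<and> snd ij < length (P (fst ij)) \<and>
      pcross (P (fst ij) ! snd ij) = c \<and> pover (P (fst ij) ! snd ij) = b)"

definition strand_loc :: "nat \<Rightarrow> 'c diagram \<Rightarrow> 'c \<Rightarrow> int \<Rightarrow> nat \<times> nat" where
  "strand_loc k P c e = (THE ij. fst ij < k \<and> snd ij < length (P (fst ij)) \<and>
      pcross (P (fst ij) ! snd ij) = c \<and> ichange (P (fst ij) ! snd ij) = e)"

definition is_self :: "nat \<Rightarrow> 'c diagram \<Rightarrow> 'c \<Rightarrow> bool" where
  "is_self k P c \<longleftrightarrow> fst (loc k P c True) = fst (loc k P c False)"

text \<open>Positive crossing: the overstrand is the bottom-left-to-top-right strand
  (index change -1).\<close>
definition positive :: "nat \<Rightarrow> 'c diagram \<Rightarrow> 'c \<Rightarrow> bool" where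
  "positive k P c \<longleftrightarrow> (case loc k P c True of (i, j) \<Rightarrow> ichange (P i ! j) = -1)"

definition comp_weight :: "nat \<Rightarrow> 'c diagram \<Rightarrow> nat \<Rightarrow> int" where
  "comp_weight k P i = (\<Sum>q\<leftarrow>P i. if is_self k P (pcross q) then 0 else ichange q)"

text \<open>Affine bilabel of arc j of component i, starting bilabel (a1 i, a2 i)
  (the formal variables are modelled by arbitrary integers). Arc (length (P i))
  carries the discrepancy (weight in the second entry).\<close>
definition label :: "nat \<Rightarrow> 'c diagram \<Rightarrow> (nat \<Rightarrow> int) \<Rightarrow> (nat \<Rightarrow> int) \<Rightarrow> nat \<Rightarrow> nat \<Rightarrow> int \<times> int" where
  "label k P a1 a2 i j =
     (a1 i + (\<Sum>q\<leftarrow>take j (P i). if is_self k P (pcross q) then ichange q else 0),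
      a2 i + (\<Sum>q\<leftarrow>take j (P i). if is_self k P (pcross q) then 0 else ichange q))"

definition babs :: "int \<times> int \<Rightarrow> int" where "babs xy = fst xy + snd xy"

text \<open>Arcs at crossing c drawn with both strands upward: the (-1)-strand runs
  bottom-left to top-right, the (+1)-strand bottom-right to top-left.\<close>
definition arc_BL where "arc_BL k P a1 a2 c = (case strand_loc k P c (-1) of (i, j) \<Rightarrow> label k P a1 a2 i j)"
definition arc_TR where "arc_TR k P a1 a2 c = (case strand_loc k P c (-1) of (i, j) \<Rightarrow> label k P a1 a2 i (Suc j))"
definition arc_BR where "arc_BR k P a1 a2 c = (case strand_loc k P c 1 of (i, j) \<Rightarrow> label k P a1 a2 i j)"
definition arc_TL where "arc_TL k P a1 a2 c = (case strand_loc k P c 1 of (i, j) \<Rightarrow> label k P a1 a2 i (Suc j))"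

definition cweight :: "nat \<Rightarrow> 'c diagram \<Rightarrow> (nat \<Rightarrow> int) \<Rightarrow> (nat \<Rightarrow> int) \<Rightarrow> 'c \<Rightarrow> int" where
  "cweight k P a1 a2 c =
     (if positive k P c then babs (arc_BL k P a1 a2 c) - babs (arc_TL k P a1 a2 c)
      else babs (arc_BR k P a1 a2 c) - babs (arc_TR k P a1 a2 c))"

end

theory Submission
  imports Defs
begin

text \<open>Moving the starting point of L_i past its first passage x rotates the list of
  passages of L_i by one. The self-crossings of L_i contribute +e and -e to the first
  label entry in pairs, so L_i ends with label (a1, a2 + n). Hence every arc after x
  loses the contribution (\<iota>, 0) of x, while the arc before x, which now ends the
  component, carries (a1 - \<iota>, a2 + n) instead of (a1, a2). In both cases of its
  definition, W(c) is |incoming arc of the overstrand| - |outgoing arc of the understrand|;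
  the two arcs of x gain n - \<iota> and those of the other passage through c lose \<iota>, so W(c)
  changes by +n or -n according as x is the over- or the understrand.\<close>

lemma wf_diagramD:
  assumes "wf_diagram k P" "a < k" "j < length (P a)" "P a ! j = (c, b, e)"
  shows "e = 1 \<or> e = -1"
    and "\<exists>!ij. fst ij < k \<and> snd ij < length (P (fst ij)) \<and>
              pcross (P (fst ij) ! snd ij) = c \<and> pover (P (fst ij) ! snd ij) = b"
    and "\<exists>a'<k. \<exists>j'<length (P a'). P a' ! j' = (c, \<not> b, - e)"
proof -
  have "case P a ! j of (c, b, e) \<Rightarrow>
       (e = 1 \<or> e = -1) \<and>
       (\<exists>!ij. fst ij < k \<and> snd ij < length (P (fst ij)) \<and>
              pcross (P (fst ij) ! snd ij) = c \<and> pover (P (fst ij) ! snd ij) = b) \<and>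
       (\<exists>i'<k. \<exists>j'<length (P i'). P i' ! j' = (c, \<not> b, - e))"
    using assms(1)[unfolded wf_diagram_def, rule_format, OF assms(2,3)] .
  then show "e = 1 \<or> e = -1"
    and "\<exists>!ij. fst ij < k \<and> snd ij < length (P (fst ij)) \<and>
              pcross (P (fst ij) ! snd ij) = c \<and> pover (P (fst ij) ! snd ij) = b"
    and "\<exists>a'<k. \<exists>j'<length (P a'). P a' ! j' = (c, \<not> b, - e)"
    unfolding assms(4) by simp_all
qed

lemma loc_eqI:
  assumes "wf_diagram k P" "a < k" "j < length (P a)" "P a ! j = (c, b, e)"
  shows "loc k P c b = (a, j)"
  unfolding loc_def
  by (rule the1_equality[OF wf_diagramD(2)[OF assms]])
    (use assms in \<open>simp add: pcross_def pover_def\<close>)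

lemma loc_partner:
  assumes "wf_diagram k P" "a < k" "j < length (P a)" "P a ! j = (c, b, e)"
  obtains a' j' where "a' < k" "j' < length (P a')" "P a' ! j' = (c, \<not> b, - e)"
    and "loc k P c (\<not> b) = (a', j')"
  by (metis wf_diagramD(3)[OF assms] loc_eqI[OF assms(1)])

lemma strand_loc_eqI:
  assumes wf: "wf_diagram k P" and pass: "a < k" "j < length (P a)" "P a ! j = (c, b, e)"
  shows "strand_loc k P c e = (a, j)"
  unfolding strand_loc_def
proof (rule the_equality)
  fix ij assume "fst ij < k \<and> snd ij < length (P (fst ij)) \<and>
      pcross (P (fst ij) ! snd ij) = c \<and> ichange (P (fst ij) ! snd ij) = e"
  then obtain a2 j2 b2 where ij: "ij = (a2, j2)" and pass2: "a2 < k" "j2 < length (P a2)"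
      "P a2 ! j2 = (c, b2, e)"
    by (cases ij, cases "P (fst ij) ! snd ij") (auto simp: pcross_def ichange_def)
  obtain a' j' where partner: "P a' ! j' = (c, \<not> b, - e)" "loc k P c (\<not> b) = (a', j')"
    using loc_partner[OF wf pass] by blast
  have "b2 = b"
  proof (rule ccontr)
    assume "b2 \<noteq> b"
    then have "(a2, j2) = (a', j')" using loc_eqI[OF wf pass2] partner(2) by simp
    then have "e = - e" using pass2(3) partner(1) by simp
    then show False using wf_diagramD(1)[OF wf pass] by auto
  qed
  then show "ij = (a, j)" using loc_eqI[OF wf pass] loc_eqI[OF wf pass2] ij by simp
qed (use pass in \<open>simp add: pcross_def ichange_def\<close>)

lemma cweight_over_under:
  assumes wf: "wf_diagram k P"
    and over: "a < k" "j < length (P a)" "P a ! j = (c, True, e)"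
    and under: "a' < k" "j' < length (P a')" "P a' ! j' = (c, False, e')"
  shows "cweight k P a1 a2 c = babs (label k P a1 a2 a j) - babs (label k P a1 a2 a' (Suc j'))"
proof -
  obtain a'' j'' where "P a'' ! j'' = (c, False, - e)" "loc k P c False = (a'', j'')"
    using loc_partner[OF wf over, unfolded not_True_eq_False] by blast
  then have "e' = - e"
    using loc_eqI[OF wf under] under(3) by simp
  then have strands: "strand_loc k P c e = (a, j)" "strand_loc k P c (- e) = (a', j')"
    using strand_loc_eqI[OF wf over] strand_loc_eqI[OF wf under] by simp_all
  have positive: "positive k P c \<longleftrightarrow> e = -1"
    using loc_eqI[OF wf over] over(3) by (simp add: positive_def ichange_def)
  from wf_diagramD(1)[OF wf over] show ?thesis
  proof
    assume "e = 1"
    then show ?thesis using strands positive by (simp add: cweight_def arc_BR_def arc_TR_def)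
  next
    assume "e = -1"
    then show ?thesis using strands positive by (simp add: cweight_def arc_BL_def arc_TL_def)
  qed
qed

lemma is_self_iff_same_component:
  assumes wf: "wf_diagram k P"
    and "a < k" "(c, b, e) \<in> set (P a)" "a' < k" "(c, \<not> b, e') \<in> set (P a')"
  shows "is_self k P c \<longleftrightarrow> a = a'"
proof -
  obtain j j' where "j < length (P a)" "P a ! j = (c, b, e)"
      "j' < length (P a')" "P a' ! j' = (c, \<not> b, e')"
    using assms(3,5) by (auto simp: in_set_conv_nth)
  then have "loc k P c b = (a, j)" "loc k P c (\<not> b) = (a', j')"
    using loc_eqI[OF wf] assms(2,4) by blast+
  then show ?thesis by (cases b) (auto simp: is_self_def)
qed

lemma self_crossing_partner:
  assumes wf: "wf_diagram k P" and pass: "i < k" "j < length (P i)" "P i ! j = (c, b, e)"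
    and self: "is_self k P c"
  obtains j' where "j' < length (P i)" "P i ! j' = (c, \<not> b, - e)"
proof -
  obtain a' j' where partner: "a' < k" "j' < length (P a')" "P a' ! j' = (c, \<not> b, - e)"
    using loc_partner[OF wf pass] by blast
  have "a' = i"
    using is_self_iff_same_component[OF wf pass(1) _ partner(1)] self pass(2,3) partner(2,3)
    by (metis nth_mem)
  then show thesis using that partner by blast
qed

lemma self_ichange_sum_zero:
  assumes wf: "wf_diagram k P" and i: "i < k"
  shows "(\<Sum>q\<leftarrow>P i. if is_self k P (pcross q) then ichange q else 0) = 0"
proof -
  define S where "S = {j \<in> {..<length (P i)}. is_self k P (pcross (P i ! j))}"
  define partner where "partner j = snd (loc k P (pcross (P i ! j)) (\<not> pover (P i ! j)))" for j
  have partner: "partner j \<in> S \<and> partner (partner j) = j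
      \<and> ichange (P i ! partner j) = - ichange (P i ! j)" if "j \<in> S" for j
  proof -
    obtain c b e where q: "P i ! j = (c, b, e)" by (cases "P i ! j")
    have j: "j < length (P i)" "is_self k P c" using that q by (auto simp: S_def pcross_def)
    obtain j' where j': "j' < length (P i)" "P i ! j' = (c, \<not> b, - e)"
      using self_crossing_partner[OF wf i j(1) q j(2)] .
    have "partner j = j'" "partner j' = j"
      using loc_eqI[OF wf i j(1) q] loc_eqI[OF wf i j'] q j'(2)
      by (simp_all add: partner_def pcross_def pover_def)
    then show ?thesis using j j' q by (simp add: S_def pcross_def ichange_def)
  qed
  have "(\<Sum>j\<in>S. ichange (P i ! j)) = (\<Sum>j\<in>S. - ichange (P i ! j))"
    by (rule sum.reindex_bij_witness[where i = partner and j = partner]) (use partner in auto)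
  then have "(\<Sum>j\<in>S. ichange (P i ! j)) = 0"
    by (simp add: sum_negf)
  moreover have "(\<Sum>q\<leftarrow>P i. if is_self k P (pcross q) then ichange q else 0)
      = (\<Sum>j\<in>S. ichange (P i ! j))"
    unfolding S_def sum.inter_filter[OF finite_lessThan]
    by (simp add: sum_list_sum_nth atLeast0LessThan)
  ultimately show ?thesis by simp
qed

lemma label_length:
  assumes "wf_diagram k P" "i < k"
  shows "label k P a1 a2 i (length (P i)) = (a1 i, a2 i + comp_weight k P i)"
  using self_ichange_sum_zero[OF assms] by (simp add: label_def comp_weight_def)

lemma wf_diagram_rotate1:
  assumes wf: "wf_diagram k P"
  shows "wf_diagram k (P(i := rotate1 (P i)))" (is "wf_diagram k ?P'")
  unfolding wf_diagram_def
proof (intro allI impI)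
  fix a j assume a: "a < k" and j: "j < length (?P' a)"
  define orig where "orig a j = (if a = i then Suc j mod length (P i) else j)" for a j
  have orig: "orig a j < length (P a) \<and> ?P' a ! j = P a ! orig a j"
    if "j < length (?P' a)" for a j
  proof (cases "a = i")
    case True
    then have "0 < length (P i)" using that by auto
    then show ?thesis using that True by (simp add: orig_def nth_rotate1)
  qed (use that in \<open>simp add: orig_def\<close>)
  have orig_inj: "j1 = j2"
    if "orig a j1 = orig a j2" "j1 < length (?P' a)" "j2 < length (?P' a)" for a j1 j2
    using that by (auto simp: orig_def mod_Suc split: if_splits)
  obtain c b e where q: "?P' a ! j = (c, b, e)" by (cases "?P' a ! j")
  then have pass: "orig a j < length (P a)" "P a ! orig a j = (c, b, e)"
    using orig[OF j] by simp_all
  have "\<exists>!ij. fst ij < k \<and> snd ij < length (?P' (fst ij)) \<and>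
      pcross (?P' (fst ij) ! snd ij) = c \<and> pover (?P' (fst ij) ! snd ij) = b"
  proof (rule ex1I[of _ "(a, j)"])
    fix ij assume "fst ij < k \<and> snd ij < length (?P' (fst ij)) \<and>
        pcross (?P' (fst ij) ! snd ij) = c \<and> pover (?P' (fst ij) ! snd ij) = b"
    then obtain a2 j2 e2 where ij: "ij = (a2, j2)" "a2 < k" "j2 < length (?P' a2)"
        "?P' a2 ! j2 = (c, b, e2)"
      by (cases ij, cases "?P' (fst ij) ! snd ij") (auto simp: pcross_def pover_def)
    have "P a2 ! orig a2 j2 = (c, b, e2)"
      using orig[OF ij(3)] ij(4) by simp
    then have "(a2, orig a2 j2) = loc k P c b"
      using loc_eqI[OF wf ij(2) conjunct1[OF orig[OF ij(3)]]] by simp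
    also have "\<dots> = (a, orig a j)"
      using loc_eqI[OF wf a pass] .
    finally show "ij = (a, j)" using orig_inj ij j by auto
  qed (use a j q in \<open>simp add: pcross_def pover_def\<close>)
  moreover obtain a' j' where "a' < k" "j' < length (P a')" "P a' ! j' = (c, \<not> b, - e)"
    using wf_diagramD(3)[OF wf a pass] by blast
  then have "\<exists>a'<k. \<exists>j'<length (?P' a'). ?P' a' ! j' = (c, \<not> b, - e)"
    by (metis in_set_conv_nth nth_mem set_rotate1 fun_upd_apply)
  ultimately show "case ?P' a ! j of (c, b, e) \<Rightarrow> (e = 1 \<or> e = -1) \<and>
      (\<exists>!ij. fst ij < k \<and> snd ij < length (?P' (fst ij)) \<and>
         pcross (?P' (fst ij) ! snd ij) = c \<and> pover (?P' (fst ij) ! snd ij) = b) \<and>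
      (\<exists>i'<k. \<exists>j'<length (?P' i'). ?P' i' ! j' = (c, \<not> b, - e))"
    using wf_diagramD(1)[OF wf a pass] q by simp
qed

lemma is_self_rotate1:
  assumes wf: "wf_diagram k P" and "a < k" "q \<in> set (P a)"
  shows "is_self k (P(i := rotate1 (P i))) (pcross q) = is_self k P (pcross q)"
proof -
  obtain c b e where q: "q = (c, b, e)" by (cases q)
  obtain j where "j < length (P a)" "P a ! j = (c, b, e)"
    using assms(3) q by (auto simp: in_set_conv_nth)
  then obtain a' j' where partner: "a' < k" "j' < length (P a')" "P a' ! j' = (c, \<not> b, - e)"
    using loc_partner[OF wf \<open>a < k\<close>] by blast
  have mem: "(c, b, e) \<in> set (P a)" "(c, \<not> b, - e) \<in> set (P a')"
    using assms(3) q nth_mem[OF partner(2)] partner(3) by auto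
  have same_sets: "set ((P(i := rotate1 (P i))) x) = set (P x)" for x
    by simp
  have "is_self k P c \<longleftrightarrow> a = a'"
    using is_self_iff_same_component[OF wf \<open>a < k\<close> mem(1) partner(1) mem(2)] .
  moreover have "is_self k (P(i := rotate1 (P i))) c \<longleftrightarrow> a = a'"
    using is_self_iff_same_component[OF wf_diagram_rotate1[OF wf] \<open>a < k\<close>
        mem(1)[folded same_sets] partner(1) mem(2)[folded same_sets]] .
  ultimately show ?thesis using q by (simp add: pcross_def)
qed

lemma comp_weight_rotate1:
  assumes wf: "wf_diagram k P" and "i < k"
  shows "comp_weight k (P(i := rotate1 (P i))) i = comp_weight k P i"
proof -
  have "comp_weight k (P(i := rotate1 (P i))) i
      = (\<Sum>q\<leftarrow>rotate1 (P i). if is_self k P (pcross q) then 0 else ichange q)"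
    unfolding comp_weight_def
    using is_self_rotate1[OF assms] by (intro arg_cong[where f = sum_list] map_cong) simp_all
  also have "\<dots> = comp_weight k P i"
    by (cases "P i") (simp_all add: comp_weight_def)
  finally show ?thesis .
qed

lemma label_rotate1:
  assumes wf: "wf_diagram k P" and "i < k"
    and first: "P i ! 0 = (c, b, \<iota>)" and self: "is_self k P c"
    and j: "1 \<le> j" "j \<le> length (P i)"
  shows "label k (P(i := rotate1 (P i))) a1 a2 i (j - 1)
           = (fst (label k P a1 a2 i j) - \<iota>, snd (label k P a1 a2 i j))"
proof -
  let ?P' = "P(i := rotate1 (P i))"
  obtain xs where Pi: "P i = (c, b, \<iota>) # xs"
    using first j by (cases "P i") auto
  have prefixes: "take (j - 1) (?P' i) = take (j - 1) xs"
      "take j (P i) = (c, b, \<iota>) # take (j - 1) xs"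
    using Pi j by (simp, cases j, auto)
  have "is_self k ?P' (pcross q) = is_self k P (pcross q)"
    if "q \<in> set (take (j - 1) xs)" for q
  proof -
    have "q \<in> set (P i)" using that Pi by (auto dest: in_set_takeD)
    then show ?thesis by (rule is_self_rotate1[OF wf \<open>i < k\<close>])
  qed
  then have map_eq: "map (\<lambda>q. if is_self k ?P' (pcross q) then x q else y q) (take (j - 1) xs)
      = map (\<lambda>q. if is_self k P (pcross q) then x q else y q) (take (j - 1) xs)"
    for x y :: "_ \<Rightarrow> int"
    by (intro map_cong) simp_all
  show ?thesis
    using self unfolding label_def prefixes map_eq by (simp add: pcross_def ichange_def)
qed

lemma cweight_rotate1:
  assumes wf: "wf_diagram k P" and "i < k" and nonempty: "P i \<noteq> []"
    and first: "P i ! 0 = (c, b, \<iota>)" and self: "is_self k P c"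
  shows "cweight k (P(i := rotate1 (P i))) a1 a2 c
           = cweight k P a1 a2 c + (if b then comp_weight k P i else - comp_weight k P i)"
proof -
  let ?P' = "P(i := rotate1 (P i))" and ?L = "length (P i)" and ?n = "comp_weight k P i"
  have weight: "cweight k Q a1 a2 c
      = (if b then babs (label k Q a1 a2 i j) - babs (label k Q a1 a2 i (Suc j'))
         else babs (label k Q a1 a2 i j') - babs (label k Q a1 a2 i (Suc j)))"
    if "wf_diagram k Q" "j < length (Q i)" "Q i ! j = (c, b, \<iota>)"
      "j' < length (Q i)" "Q i ! j' = (c, \<not> b, - \<iota>)" for Q j j'
    using that cweight_over_under[OF that(1) \<open>i < k\<close> _ _ \<open>i < k\<close>] by (cases b) simp_all
  have wf': "wf_diagram k ?P'" using wf_diagram_rotate1[OF wf] .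
  note shifted = label_rotate1[OF wf \<open>i < k\<close> first self]
  have L: "0 < ?L" using nonempty by simp
  obtain p where p: "p < ?L" "P i ! p = (c, \<not> b, - \<iota>)"
    using self_crossing_partner[OF wf \<open>i < k\<close> L first self] .
  have "p \<noteq> 0" using p(2) first by (metis prod.inject)
  have rotated: "?P' i ! (?L - 1) = (c, b, \<iota>)" "?P' i ! (p - 1) = (c, \<not> b, - \<iota>)"
    using first p \<open>p \<noteq> 0\<close> L by (simp_all add: nth_rotate1)
  have "take 1 (P i) = [(c, b, \<iota>)]"
    using nonempty first by (cases "P i") auto
  then have starts:
      "label k P a1 a2 i 0 = (a1 i, a2 i)" "label k P a1 a2 i 1 = (a1 i + \<iota>, a2 i)"
    using self by (simp_all add: label_def pcross_def ichange_def)
  have ends: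
      "label k P a1 a2 i ?L = (a1 i, a2 i + ?n)" "label k ?P' a1 a2 i ?L = (a1 i, a2 i + ?n)"
    using label_length[OF wf \<open>i < k\<close>] label_length[OF wf' \<open>i < k\<close>]
      comp_weight_rotate1[OF wf \<open>i < k\<close>] by simp_all
  have "cweight k P a1 a2 c
      = (if b then babs (label k P a1 a2 i 0) - babs (label k P a1 a2 i (Suc p))
         else babs (label k P a1 a2 i p) - babs (label k P a1 a2 i 1))"
    using weight[OF wf L first p] by simp
  moreover have "cweight k ?P' a1 a2 c
      = (if b
         then babs (label k ?P' a1 a2 i (?L - 1)) - babs (label k ?P' a1 a2 i (Suc (p - 1)))
         else babs (label k ?P' a1 a2 i (p - 1)) - babs (label k ?P' a1 a2 i (Suc (?L - 1))))"
    using L p(1) by (intro weight[OF wf' _ rotated(1) _ rotated(2)]) simp_all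
  ultimately show ?thesis
    using shifted[of ?L] shifted[of "Suc p"] shifted[of p] starts ends L p(1) \<open>p \<noteq> 0\<close>
    by (simp add: babs_def)
qed

theorem lemma2:
  fixes k :: nat and P :: "'c diagram" and a1 a2 :: "nat \<Rightarrow> int"
    and i :: nat and c :: 'c and b :: bool and \<iota> n :: int
  assumes "wf_diagram k P"
    and "i < k"
    and "P i \<noteq> []"
    and "P i ! 0 = (c, b, \<iota>)"
    and "is_self k P c"
    and "n = comp_weight k P i"
  shows "cweight k (P(i := rotate1 (P i))) a1 a2 c
           = cweight k P a1 a2 c + (if b then n else - n)
    \<and> (\<forall>j. 1 \<le> j \<and> j \<le> length (P i) \<longrightarrow>
           label k (P(i := rotate1 (P i))) a1 a2 i (j - 1)
             = (fst (label k P a1 a2 i j) - \<iota>, snd (label k P a1 a2 i j)))"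
  using cweight_rotate1[OF assms(1-5)] label_rotate1[OF assms(1,2,4,5)] assms(6) by blast

end
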